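(* Let $V$ be a potential satisfying (E1). Then $\mathbb P$-a.s., for every $y\in\mathbb R^d$, $\mathcal R(-\Lambda_\omega)(y)\ge\mathcal R(\sigma)(y)$.
   Context: $(\Omega,\mathcal F,\mathbb P)$ probability space, $d\in\mathbb N$, $x\mapsto\tau_x$ a group homomorphism from $(\mathbb R^d,+)$ into bijections of $\Omega$, $(x,\omega)\mapsto\tau_x\omega$ product measurable, each $\tau_x$ $\mathbb P$-preserving. $L^p=L^p(\Omega,\mathcal F,\mathbb P)$. Realisation $f_\omega(x):=f(\tau_x\omega)$. A potential is a nonnegative $V\in L^1$ none of whose realisations is Lebesgue-a.e. zero. $E^\lambda$ is the expectation for Brownian motion $(Z_t)$ with constant drift $\lambda$ started at $0$; $\Lambda_\omega(\lambda):=\limsup_{t\to\infty}\frac1t\ln E^\lambda[e^{-\int_0^tV_\omega(Z_s)ds}]$. Weak derivatives on $\Omega$: $D^\nu f=h$ if a.s. $f_\omega\in L^1_{loc}$ has $\nu$-th weak derivative equal Lebesgue-a.e. to $h_\omega$, $h$ measurable on $\Omega$. $\mathcal D(\partial_i)=\{f\in L^2:\partial_if\in L^2\text{ exists weakly}\}$, $\mathbb D_w=\bigcap_i\mathcal D(\partial_i)$, $\mathbb D_w^2=\{f\in\mathbb D_w:\partial_if\in\mathcal D(\partial_i)\,\forall i,\ \|f\|_\infty,\|\nabla f\|_\infty,\|\Delta f\|_\infty<\infty\}$, $\mathbb U=\{u\in\mathbb D_w^2:\exists c>0,u>c\text{ a.s.}\}$, $\mathbb F_w^2=\{f\in\mathbb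 D_w^2:\mathbb Ef=1,\exists c>0: f>c\text{ a.s.}\}$. With $L^\lambda=\frac12\Delta+\lambda\cdot\nabla$, $\sigma(\lambda):=-\sup_{f\in\mathbb F_w^2}\inf_{u\in\mathbb U}\int(\frac{L^\lambda u}{u}-V)f\,d\mathbb P$. (E1): for every $\lambda\in\mathbb R^d$ with $|\lambda|^2/2<\sigma(\lambda)$, $\mathbb P$-a.s. $\sigma(\lambda)\le-\Lambda_\omega(\lambda)$. For $a:\mathbb R^d\to\mathbb R$, $\mathcal R(a)(y):=\sup\{\langle y,\lambda\rangle:|\lambda|^2/2<a(\lambda)\}$, $\sup\emptyset=-\infty$. *)

theory Defs
  imports "HOL-Probability.Probability"
begin

definition mp_flow :: "'a measure \<Rightarrow> ('v::euclidean_space \<Rightarrow> 'a \<Rightarrow> 'a) \<Rightarrow> bool" where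
  "mp_flow M \<tau> \<longleftrightarrow>
     prob_space M \<and>
     (\<forall>x. bij_betw (\<tau> x) (space M) (space M)) \<and>
     (\<forall>x y. \<forall>\<omega>\<in>space M. \<tau> (x + y) \<omega> = \<tau> x (\<tau> y \<omega>)) \<and>
     (\<forall>\<omega>\<in>space M. \<tau> 0 \<omega> = \<omega>) \<and>
     (\<lambda>(x, \<omega>). \<tau> x \<omega>) \<in> measurable (lborel \<Otimes>\<^sub>M M) M \<and>
     (\<forall>x. \<tau> x \<in> measurable M M \<and> distr M M (\<tau> x) = M)"

definition realis :: "('v \<Rightarrow> 'a \<Rightarrow> 'a) \<Rightarrow> ('a \<Rightarrow> 'b) \<Rightarrow> 'a \<Rightarrow> 'v \<Rightarrow> 'b" where
  "realis \<tau> f \<omega> x = f (\<tau> x \<omega>)"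

definition potential :: "'a measure \<Rightarrow> ('v::euclidean_space \<Rightarrow> 'a \<Rightarrow> 'a) \<Rightarrow> ('a \<Rightarrow> real) \<Rightarrow> bool" where
  "potential M \<tau> V \<longleftrightarrow>
     integrable M V \<and> (\<forall>\<omega>\<in>space M. V \<omega> \<ge> 0) \<and>
     (\<forall>\<omega>\<in>space M. \<not> (AE x in lborel. realis \<tau> V \<omega> x = 0))"

definition gaussian_iso :: "real \<Rightarrow> 'v::euclidean_space measure" where
  "gaussian_iso c = density lborel
     (\<lambda>x. ennreal (exp (- (norm x)\<^sup>2 / (2 * c)) / (2 * pi * c) powr (real DIM('v) / 2)))"

definition brownian_motion :: "'w measure \<Rightarrow> (real \<Rightarrow> 'w \<Rightarrow> 'v::euclidean_space) \<Rightarrow> bool" where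
  "brownian_motion P B \<longleftrightarrow>
     prob_space P \<and>
     (\<forall>t. B t \<in> borel_measurable P) \<and>
     (\<forall>w\<in>space P. B 0 w = 0 \<and> continuous_on {0..} (\<lambda>t. B t w)) \<and>
     (\<forall>(ts :: nat \<Rightarrow> real) n. 0 \<le> ts 0 \<longrightarrow> (\<forall>i<n. ts i \<le> ts (Suc i)) \<longrightarrow>
        prob_space.indep_vars P (\<lambda>_. borel) (\<lambda>i w. B (ts (Suc i)) w - B (ts i) w) {..<n}) \<and>
     (\<forall>s t. 0 \<le> s \<longrightarrow> s < t \<longrightarrow> distr P borel (\<lambda>w. B t w - B s w) = gaussian_iso (t - s))"

definition exp_neg_enn :: "ennreal \<Rightarrow> real" where
  "exp_neg_enn I = (if I = \<infinity> then 0 else exp (- enn2real I))"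

definition FK_expect :: "'w measure \<Rightarrow> (real \<Rightarrow> 'w \<Rightarrow> 'v::euclidean_space) \<Rightarrow>
    ('v \<Rightarrow> 'a \<Rightarrow> 'a) \<Rightarrow> ('a \<Rightarrow> real) \<Rightarrow> 'a \<Rightarrow> 'v \<Rightarrow> real \<Rightarrow> real" where
  "FK_expect P B \<tau> V \<omega> l t =
     (\<integral>w. exp_neg_enn (\<integral>\<^sup>+ s\<in>{0..t}. ennreal (realis \<tau> V \<omega> (s *\<^sub>R l + B s w)) \<partial>lborel) \<partial>P)"

definition Lambda :: "'w measure \<Rightarrow> (real \<Rightarrow> 'w \<Rightarrow> 'v::euclidean_space) \<Rightarrow>
    ('v \<Rightarrow> 'a \<Rightarrow> 'a) \<Rightarrow> ('a \<Rightarrow> real) \<Rightarrow> 'a \<Rightarrow> 'v \<Rightarrow> ereal" where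
  "Lambda P B \<tau> V \<omega> l =
     Limsup at_top (\<lambda>t. let E = FK_expect P B \<tau> V \<omega> l t in
                         if E \<le> 0 then -\<infinity> else ereal (ln E / t))"

fun iter_partial :: "'v list \<Rightarrow> ('v::euclidean_space \<Rightarrow> real) \<Rightarrow> 'v \<Rightarrow> real" where
  "iter_partial [] \<phi> = \<phi>"
| "iter_partial (i # is) \<phi> = (\<lambda>x. frechet_derivative (iter_partial is \<phi>) (at x) i)"

definition smooth_fun :: "('v::euclidean_space \<Rightarrow> real) \<Rightarrow> bool" where
  "smooth_fun \<phi> \<longleftrightarrow>
     (\<forall>is. set is \<subseteq> Basis \<longrightarrow> (\<forall>x. iter_partial is \<phi> differentiable (at x)))"

definition test_fun :: "('v::euclidean_space \<Rightarrow> real) \<Rightarrow> bool" where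
  "test_fun \<phi> \<longleftrightarrow> smooth_fun \<phi> \<and> compact (closure {x. \<phi> x \<noteq> 0})"

definition loc_integrable :: "('v::euclidean_space \<Rightarrow> real) \<Rightarrow> bool" where
  "loc_integrable g \<longleftrightarrow> (\<forall>K. compact K \<longrightarrow> set_integrable lborel K g)"

definition weak_partial :: "'v::euclidean_space \<Rightarrow> ('v \<Rightarrow> real) \<Rightarrow> ('v \<Rightarrow> real) \<Rightarrow> bool" where
  "weak_partial i g h \<longleftrightarrow> loc_integrable g \<and> loc_integrable h \<and>
     (\<forall>\<phi>. test_fun \<phi> \<longrightarrow>
        (\<integral>x. g x * frechet_derivative \<phi> (at x) i \<partial>lborel) = - (\<integral>x. h x * \<phi> x \<partial>lborel))"

definition omega_partial :: "'a measure \<Rightarrow> ('v::euclidean_space \<Rightarrow> 'a \<Rightarrow> 'a) \<Rightarrow> 'v \<Rightarrow>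
    ('a \<Rightarrow> real) \<Rightarrow> ('a \<Rightarrow> real) \<Rightarrow> bool" where
  "omega_partial M \<tau> i f h \<longleftrightarrow> h \<in> borel_measurable M \<and>
     (AE \<omega> in M. weak_partial i (realis \<tau> f \<omega>) (realis \<tau> h \<omega>))"

definition L2 :: "'a measure \<Rightarrow> ('a \<Rightarrow> real) \<Rightarrow> bool" where
  "L2 M f \<longleftrightarrow> f \<in> borel_measurable M \<and> integrable M (\<lambda>\<omega>. (f \<omega>)\<^sup>2)"

definition ess_bounded :: "'a measure \<Rightarrow> ('a \<Rightarrow> real) \<Rightarrow> bool" where
  "ess_bounded M f \<longleftrightarrow> (\<exists>C. AE \<omega> in M. \<bar>f \<omega>\<bar> \<le> C)"

definition Dw2_with :: "'a measure \<Rightarrow> ('v::euclidean_space \<Rightarrow> 'a \<Rightarrow> 'a) \<Rightarrow>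
    ('a \<Rightarrow> real) \<Rightarrow> ('v \<Rightarrow> 'a \<Rightarrow> real) \<Rightarrow> ('v \<Rightarrow> 'a \<Rightarrow> real) \<Rightarrow> bool" where
  "Dw2_with M \<tau> f h g \<longleftrightarrow>
     L2 M f \<and>
     (\<forall>i\<in>Basis. omega_partial M \<tau> i f (h i) \<and> L2 M (h i)
                 \<and> omega_partial M \<tau> i (h i) (g i) \<and> L2 M (g i)) \<and>
     ess_bounded M f \<and>
     ess_bounded M (\<lambda>\<omega>. norm (\<Sum>i\<in>Basis. h i \<omega> *\<^sub>R i)) \<and>
     ess_bounded M (\<lambda>\<omega>. \<Sum>i\<in>Basis. g i \<omega>)"

definition Dw2 :: "'a measure \<Rightarrow> ('v::euclidean_space \<Rightarrow> 'a \<Rightarrow> 'a) \<Rightarrow> ('a \<Rightarrow> real) \<Rightarrow> bool" where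
  "Dw2 M \<tau> f \<longleftrightarrow> (\<exists>h g. Dw2_with M \<tau> f h g)"

definition U_with :: "'a measure \<Rightarrow> ('v::euclidean_space \<Rightarrow> 'a \<Rightarrow> 'a) \<Rightarrow>
    (('a \<Rightarrow> real) \<times> ('v \<Rightarrow> 'a \<Rightarrow> real) \<times> ('v \<Rightarrow> 'a \<Rightarrow> real)) set" where
  "U_with M \<tau> = {(u, h, g). Dw2_with M \<tau> u h g \<and> (\<exists>c>0. AE \<omega> in M. u \<omega> > c)}"

definition Fw2 :: "'a measure \<Rightarrow> ('v::euclidean_space \<Rightarrow> 'a \<Rightarrow> 'a) \<Rightarrow> ('a \<Rightarrow> real) set" where
  "Fw2 M \<tau> = {f. Dw2 M \<tau> f \<and> (\<integral>\<omega>. f \<omega> \<partial>M) = 1 \<and> (\<exists>c>0. AE \<omega> in M. f \<omega> > c)}"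

text \<open>\<sigma>(\<lambda>) = - sup_f inf_u \<integral> (L^\<lambda> u / u - V) f dP, L^\<lambda> = \<Delta>/2 + \<lambda>\<cdot>\<nabla>.\<close>
definition sigma :: "'a measure \<Rightarrow> ('v::euclidean_space \<Rightarrow> 'a \<Rightarrow> 'a) \<Rightarrow> ('a \<Rightarrow> real) \<Rightarrow> 'v \<Rightarrow> ereal" where
  "sigma M \<tau> V l = - (SUP f\<in>Fw2 M \<tau>. INF uhg\<in>U_with M \<tau>.
      (case uhg of (u, h, g) \<Rightarrow>
        ereal (\<integral>\<omega>. (((1/2) * (\<Sum>i\<in>Basis. g i \<omega>) + (\<Sum>i\<in>Basis. (l \<bullet> i) * h i \<omega>)) / u \<omega>
                     - V \<omega>) * f \<omega> \<partial>M)))"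

text \<open>\<R>(a)(y) = sup{\<langle>y,\<lambda>\<rangle> : |\<lambda>|^2/2 < a(\<lambda>)}, sup of empty set = -\<infinity>.\<close>
definition R_transf :: "('v::euclidean_space \<Rightarrow> ereal) \<Rightarrow> 'v \<Rightarrow> ereal" where
  "R_transf a y = Sup {ereal (y \<bullet> l) | l. ereal ((norm l)\<^sup>2 / 2) < a l}"

end

theory Submission
  imports Defs
begin

text \<open>(E1) only gives, for each fixed \<lambda>, a null set outside of which \<sigma>(\<lambda>) \<le> -\<Lambda>(\<omega>,\<lambda>).
  Taking the union of these null sets over a countable dense subset D of
  {\<lambda>. |\<lambda>|^2/2 < \<sigma>(\<lambda>)} yields one null set outside of which D lies in the admissible set
  of \<R>(-\<Lambda>(\<omega>,-)); since \<lambda> \<mapsto> \<langle>y,\<lambda>\<rangle> is continuous, the supremum defining \<R>(\<sigma>)(y) does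
  not change when it is taken over D only. No hypothesis other than (E1) is needed.\<close>

lemma SUP_le_SUP_dense:
  fixes f :: "'a::topological_space \<Rightarrow> 'b::{complete_linorder, linorder_topology}"
  assumes "continuous_on UNIV f" and "S \<subseteq> closure D"
  shows "(SUP x\<in>S. f x) \<le> (SUP x\<in>D. f x)"
proof -
  have "f ` closure D \<subseteq> {..(SUP x\<in>D. f x)}"
    by (rule image_closure_subset)
       (auto intro: continuous_on_subset[OF assms(1)] SUP_upper)
  then show ?thesis
    using assms(2) by (auto intro!: SUP_least)
qed

lemma R_transf_eq_SUP:
  "R_transf a y = (SUP l\<in>{l. ereal ((norm l)\<^sup>2 / 2) < a l}. ereal (y \<bullet> l))"
  unfolding R_transf_def Setcompr_eq_image[symmetric] by (simp add: Collect_mem_eq)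

lemma R_transf_le_dense:
  assumes "D \<subseteq> {l. ereal ((norm l)\<^sup>2 / 2) < b l}"
    and "{l. ereal ((norm l)\<^sup>2 / 2) < a l} \<subseteq> closure D"
  shows "R_transf a y \<le> R_transf b y"
proof -
  have "continuous_on UNIV (\<lambda>l. ereal (y \<bullet> l))"
    by (intro continuous_intros)
  then have "R_transf a y \<le> (SUP l\<in>D. ereal (y \<bullet> l))"
    unfolding R_transf_eq_SUP using assms(2) by (rule SUP_le_SUP_dense)
  also have "\<dots> \<le> R_transf b y"
    unfolding R_transf_eq_SUP using assms(1) by (intro SUP_subset_mono) auto
  finally show ?thesis .
qed

theorem lemma3p9:
  fixes M :: "'a measure" and \<tau> :: "'v::euclidean_space \<Rightarrow> 'a \<Rightarrow> 'a"
    and V :: "'a \<Rightarrow> real"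
    and P :: "'w measure" and B :: "real \<Rightarrow> 'w \<Rightarrow> 'v"
  assumes flow: "mp_flow M \<tau>"
    and pot: "potential M \<tau> V"
    and bm: "brownian_motion P B"
    and E1: "\<And>l. ereal ((norm l)\<^sup>2 / 2) < sigma M \<tau> V l \<Longrightarrow>
               AE \<omega> in M. sigma M \<tau> V l \<le> - Lambda P B \<tau> V \<omega> l"
  shows "AE \<omega> in M. \<forall>y. R_transf (\<lambda>l. - Lambda P B \<tau> V \<omega> l) y \<ge> R_transf (sigma M \<tau> V) y"
proof -
  define S where "S = {l. ereal ((norm l)\<^sup>2 / 2) < sigma M \<tau> V l}"
  obtain D where D: "countable D" "D \<subseteq> S" "S \<subseteq> closure D"
    using separable by blast
  have "AE \<omega> in M. \<forall>l\<in>D. sigma M \<tau> V l \<le> - Lambda P B \<tau> V \<omega> l"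
    using D(1,2) E1 unfolding S_def by (intro AE_ball_countable') auto
  then show ?thesis
  proof (rule AE_mp, intro AE_I2 impI allI)
    fix \<omega> y
    assume "\<forall>l\<in>D. sigma M \<tau> V l \<le> - Lambda P B \<tau> V \<omega> l"
    then have "D \<subseteq> {l. ereal ((norm l)\<^sup>2 / 2) < - Lambda P B \<tau> V \<omega> l}"
      using D(2) unfolding S_def by (auto intro: less_le_trans)
    then show "R_transf (sigma M \<tau> V) y \<le> R_transf (\<lambda>l. - Lambda P B \<tau> V \<omega> l) y"
      using D(3) unfolding S_def by (rule R_transf_le_dense)
  qed
qed

end
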